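(* Under the sampling rule of F-TaS (described in the context), run indefinitely on the $K$-armed unit-variance Gaussian bandit with $\theta\in\Theta$, with either pre-specified or $\theta$-dependent fairness rates, every arm is sampled infinitely often: $\mathbb{P}_\theta(\lim_{t\to\infty}N_a(t)=\infty)=1$ for all $a\in[K]$.
   Context: Bandit model: arms $[K]$, unknown $\theta\in\Theta:=\{\theta\in\mathbb{R}^K:\arg\max_a\theta_a\text{ unique}\}$, reward $r_t\sim\mathcal N(\theta_{a_t},1)$. $N_a(t)=\sum_{s\le t}\mathbf1\{a_s=a\}$. Fairness rates: pre-specified $p\in[0,1]^K$ with $p_{\rm sum}=\sum_ap_a\le1$, or continuous $p:\mathbb{R}^K\to[0,1]^K$ with sum at most $1$. $\Sigma_p=\{w\in[0,1]^K:w\ge p,\sum_aw_a=1\}$; for a parameter $\lambda$ with unique best arm $a^\star_\lambda$ and gaps $\Delta_a(\lambda)$, $w^\star_p(\lambda)\in\arg\min_{w\in\Sigma_p}\max_{a\ne a^\star_\lambda}(w_a^{-1}+w_{a^\star_\lambda}^{-1})/\Delta_a(\lambda)^2$ (with $p=p(\lambda)$ in the $\theta$-dependent case). F-TaS sampling rule: $\epsilon_t=1/(2\sqrt t)$; pre-specified case with $K_0=|\{a:p_a=0\}|$: if $K_0=0$, $\pi_{c,a}=p_a+(1-p_{\rm sum})/K$; otherwise $\pi_{c,a}=p_a$ if $p_a>0$ and $(1-p_{\rm sum})/K_0$ if $p_a=0$; $\theta$-dependent case: $\pi_{c,a}=1/K$. At round $t$, $a_t\sim\pi(t)=(1-\epsilon_t)w^\star_p(\hat\theta)+\epsilon_t\pi_c$,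 $\hat\theta$ the current empirical means (fixed convention when undefined). *)

theory Defs
  imports "HOL-Probability.Probability"
begin

text \<open>Arms are the elements of a finite type 'k, so K = CARD('k); parameters are
  vectors in real^'k. Rounds are indexed t = 1, 2, ...\<close>

definition Theta :: "(real^'k::finite) set" where
  "Theta = {th. \<exists>!a. \<forall>b. th$b \<le> th$a}"

definition best_arm :: "real^'k::finite \<Rightarrow> 'k" where
  "best_arm th = (THE a. \<forall>b. th$b \<le> th$a)"

definition gap :: "real^'k::finite \<Rightarrow> 'k \<Rightarrow> real" where
  "gap th a = th $ best_arm th - th $ a"

definition valid_rates :: "real^'k::finite \<Rightarrow> bool" where
  "valid_rates p \<longleftrightarrow> (\<forall>a. 0 \<le> p$a \<and> p$a \<le> 1) \<and> (\<Sum>a\<in>UNIV. p$a) \<le> 1"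

definition Sigma_p :: "real^'k::finite \<Rightarrow> (real^'k) set" where
  "Sigma_p p = {w. (\<forall>a. p$a \<le> w$a \<and> w$a \<le> 1 \<and> 0 \<le> w$a) \<and> (\<Sum>a\<in>UNIV. w$a) = 1}"

definition char_time :: "real^'k::finite \<Rightarrow> real^'k \<Rightarrow> ereal" where
  "char_time lam w = (SUP a\<in>{a. a \<noteq> best_arm lam}.
     (if w $ a = 0 \<or> w $ best_arm lam = 0 then \<infinity>
      else ereal ((1 / w$a + 1 / w$(best_arm lam)) / (gap lam a)^2)))"

definition is_opt_alloc :: "real^'k::finite \<Rightarrow> real^'k \<Rightarrow> real^'k \<Rightarrow> bool" where
  "is_opt_alloc p lam w \<longleftrightarrow> w \<in> Sigma_p p \<and> (\<forall>v\<in>Sigma_p p. char_time lam w \<le> char_time lam v)"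

definition pic_pre :: "real^'k::finite \<Rightarrow> real^'k" where
  "pic_pre p = (let psum = (\<Sum>a\<in>UNIV. p$a); K0 = card {a. p$a = 0} in
     (\<chi> a. if K0 = 0 then p$a + (1 - psum) / real CARD('k)
           else if p$a > 0 then p$a else (1 - psum) / real K0))"

definition eps :: "nat \<Rightarrow> real" where
  "eps t = 1 / (2 * sqrt (real t))"

definition Npulls :: "(nat \<Rightarrow> 'w \<Rightarrow> 'k) \<Rightarrow> nat \<Rightarrow> 'w \<Rightarrow> 'k \<Rightarrow> nat" where
  "Npulls A t w a = card {s\<in>{1..t}. A s w = a}"

text \<open>Empirical means after t rounds; th0 is the fixed convention for unsampled arms.\<close>
definition emp_mean :: "real^'k::finite \<Rightarrow> (nat \<Rightarrow> 'w \<Rightarrow> 'k) \<Rightarrow> (nat \<Rightarrow> 'w \<Rightarrow> real)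
    \<Rightarrow> nat \<Rightarrow> 'w \<Rightarrow> real^'k" where
  "emp_mean th0 A R t w = (\<chi> a. if Npulls A t w a = 0 then th0$a
      else (\<Sum>s\<in>{s\<in>{1..t}. A s w = a}. R s w) / real (Npulls A t w a))"

definition ftas_pi :: "(real^'k::finite \<Rightarrow> real^'k) \<Rightarrow> real^'k \<Rightarrow> real^'k
    \<Rightarrow> (nat \<Rightarrow> 'w \<Rightarrow> 'k) \<Rightarrow> (nat \<Rightarrow> 'w \<Rightarrow> real) \<Rightarrow> nat \<Rightarrow> 'w \<Rightarrow> real^'k" where
  "ftas_pi ws pic th0 A R t w =
     (1 - eps t) *\<^sub>R ws (emp_mean th0 A R (t - 1) w) + eps t *\<^sub>R pic"

definition hist_gens :: "'w measure \<Rightarrow> (nat \<Rightarrow> 'w \<Rightarrow> 'k) \<Rightarrow> (nat \<Rightarrow> 'w \<Rightarrow> real) \<Rightarrow> nat \<Rightarrow> 'w set set" where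
  "hist_gens M A R t =
     (\<Union>s\<in>{1..t}. {A s -` {a} \<inter> space M | a. True} \<union> {R s -` B \<inter> space M | B. B \<in> sets borel})"

definition hist :: "'w measure \<Rightarrow> (nat \<Rightarrow> 'w \<Rightarrow> 'k) \<Rightarrow> (nat \<Rightarrow> 'w \<Rightarrow> real) \<Rightarrow> nat \<Rightarrow> 'w measure" where
  "hist M A R t = sigma (space M) (hist_gens M A R t)"

definition hist_act :: "'w measure \<Rightarrow> (nat \<Rightarrow> 'w \<Rightarrow> 'k) \<Rightarrow> (nat \<Rightarrow> 'w \<Rightarrow> real) \<Rightarrow> nat \<Rightarrow> 'w measure" where
  "hist_act M A R t = sigma (space M)
     (hist_gens M A R (t - 1) \<union> {A t -` {a} \<inter> space M | a. True})"

end

theory Submission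
  imports Defs
begin

text \<open>Whatever the empirical means are, the F-TaS distribution gives arm a probability at
  least \<open>eps t * pic $ a\<close>, and \<open>pic $ a > 0\<close> for both kinds of fairness rates. Conditioning
  round by round on the history, arm a is avoided in rounds n+1, ..., m with probability at most
  \<open>\<Prod>(1 - c * eps t) \<le> exp (- c * \<Sum>eps t)\<close> with \<open>c = pic $ a\<close>, and \<open>eps t = 1 / (2 * sqrt t)\<close> is not summable.
  So "a is never pulled after round n" is a null event for every n (a conditional second
  Borel-Cantelli lemma), and a is pulled infinitely often almost surely.\<close>

lemma not_summable_imp_tail_sum_unbounded:
  fixes q :: "nat \<Rightarrow> real"
  assumes "\<And>t. 0 \<le> q t" and "\<not> summable q"
  shows "\<exists>m\<ge>n. B \<le> (\<Sum>t\<in>{n<..m}. q t)"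
proof (rule ccontr)
  assume "\<not> ?thesis"
  then have tail: "(\<Sum>t\<in>{n<..m}. q t) \<le> B" if "n \<le> m" for m
    using that by force
  have "(\<Sum>t<k. q t) \<le> (\<Sum>t\<le>n. q t) + B" for k
  proof -
    have "{..<k} \<subseteq> {..n} \<union> {n<..max n k}" by auto
    then have "(\<Sum>t<k. q t) \<le> (\<Sum>t\<in>{..n} \<union> {n<..max n k}. q t)"
      using assms(1) by (intro sum_mono2) auto
    also have "\<dots> = (\<Sum>t\<le>n. q t) + (\<Sum>t\<in>{n<..max n k}. q t)"
      by (intro sum.union_disjoint) auto
    also have "\<dots> \<le> (\<Sum>t\<le>n. q t) + B"
      using tail[of "max n k"] by simp
    finally show ?thesis .
  qed
  then have "summable q"
    using assms(1) by (intro summableI_nonneg_bounded)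
  with assms(2) show False ..
qed

lemma filterlim_card_at_top_of_frequently:
  assumes "\<exists>\<^sub>F t in sequentially. P t"
  shows "filterlim (\<lambda>t. card {s\<in>{1..t}. P s}) at_top sequentially"
  unfolding filterlim_at_top
proof
  fix Z :: nat
  have "infinite {t. P t}"
    using assms by (simp add: frequently_cofinite cofinite_eq_sequentially[symmetric])
  then have "infinite {s. 1 \<le> s \<and> P s}"
    by (rule contrapos_nn) (rule finite_subset[of _ "insert 0 {s. 1 \<le> s \<and> P s}"], auto)
  then obtain S where S: "finite S" "card S = Z" "S \<subseteq> {s. 1 \<le> s \<and> P s}"
    using infinite_arbitrarily_large by blast
  have "Z \<le> card {s\<in>{1..t}. P s}" if "Max S \<le> t" for t
  proof -
    have "S \<subseteq> {s\<in>{1..t}. P s}"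
      using S that by (auto dest: Max_ge)
    then show ?thesis
      using S(2) by (auto intro: card_mono)
  qed
  then show "\<forall>\<^sub>F t in sequentially. Z \<le> card {s\<in>{1..t}. P s}"
    unfolding eventually_sequentially by blast
qed

lemma measure_Diff_le_of_cond_prob_ge:
  assumes "finite_measure M" "subalgebra M F" "E \<in> sets F" "G \<in> sets M"
    and "AE x in M. q \<le> real_cond_exp M F (indicator G) x"
  shows "measure M (E - G) \<le> (1 - q) * measure M E"
proof -
  interpret finite_measure M by (fact assms(1))
  interpret sigma_finite_subalgebra M F
    using assms(2) by (intro finite_measure_subalgebra_is_sigma_finite)
      (simp add: finite_measure_subalgebra_def finite_measure_subalgebra_axioms_def finite_measure_axioms)
  have E: "E \<in> sets M"
    using assms(2,3) by (auto simp: subalgebra_def)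
  have EG: "(\<lambda>x. indicator E x * indicator G x :: real) = indicator (E \<inter> G)"
    by (auto simp: indicator_def)
  have int_EG: "integrable M (\<lambda>x. indicator E x * indicator G x :: real)"
    unfolding EG using E assms(4) by (auto simp: less_top[symmetric])
  have "q * measure M E = (\<integral>x. indicator E x * q \<partial>M)"
    using E by simp
  also have "\<dots> \<le> (\<integral>x. indicator E x * real_cond_exp M F (indicator G) x \<partial>M)"
  proof (rule integral_mono_AE)
    show "integrable M (\<lambda>x. indicator E x * q)" using E by (auto simp: less_top[symmetric])
    show "integrable M (\<lambda>x. indicator E x * real_cond_exp M F (indicator G) x)"
      using real_cond_exp_intg(1)[OF int_EG] assms(3,4) by simp
    show "AE x in M. indicator E x * q \<le> indicator E x * real_cond_exp M F (indicator G) x"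
      using assms(5) by eventually_elim (simp add: indicator_def)
  qed
  also have "\<dots> = measure M (E \<inter> G)"
    using real_cond_exp_intg(2)[OF int_EG] assms(3,4) E unfolding EG by simp
  finally show ?thesis
    using finite_measure_Diff'[OF E assms(4)] by (simp add: algebra_simps)
qed

lemma measure_avoid_le_exp_sum:
  assumes "prob_space M"
    and subalg: "\<And>m. subalgebra M (F m)"
    and adapted: "\<And>t m. 0 < t \<Longrightarrow> t \<le> m \<Longrightarrow> G t \<in> sets (F m)"
    and cond_prob: "\<And>m. AE x in M. q (Suc m) \<le> real_cond_exp M (F m) (indicator (G (Suc m))) x"
    and "n \<le> m"
  shows "measure M (space M - (\<Union>t\<in>{n<..m}. G t)) \<le> exp (- (\<Sum>t\<in>{n<..m}. q t))"
  using \<open>n \<le> m\<close>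
proof (induction m rule: dec_induct)
  case base
  show ?case using prob_space.prob_le_1[OF assms(1)] by simp
next
  case (step m)
  let ?avoid = "\<lambda>m. space M - (\<Union>t\<in>{n<..m}. G t)"
  have space_F: "space (F m) = space M"
    using subalg by (simp add: subalgebra_def)
  have "?avoid m \<in> sets (F m)"
    unfolding space_F[symmetric] by (intro sets.Diff sets.top sets.finite_UN adapted) auto
  moreover have "G (Suc m) \<in> sets M"
    using adapted[of "Suc m" "Suc m"] subalg[of "Suc m"] by (auto simp: subalgebra_def)
  moreover have "?avoid (Suc m) = ?avoid m - G (Suc m)"
    using step.hyps by (auto simp: le_Suc_eq)
  ultimately have "measure M (?avoid (Suc m)) \<le> (1 - q (Suc m)) * measure M (?avoid m)"
    using measure_Diff_le_of_cond_prob_ge[OF prob_space.finite_measure[OF assms(1)] subalg _ _ cond_prob]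
    by simp
  also have "\<dots> \<le> exp (- q (Suc m)) * exp (- (\<Sum>t\<in>{n<..m}. q t))"
    using exp_ge_add_one_self[of "- q (Suc m)"] step.IH
    by (intro mult_mono) auto
  also have "\<dots> = exp (- (\<Sum>t\<in>{n<..Suc m}. q t))"
  proof -
    have "{n<..Suc m} = insert (Suc m) {n<..m}" using step.hyps by auto
    then show ?thesis by (simp add: exp_add[symmetric])
  qed
  finally show ?case .
qed

lemma AE_frequently_of_cond_prob_ge:
  assumes "prob_space M"
    and subalg: "\<And>m. subalgebra M (F m)"
    and adapted: "\<And>t m. 0 < t \<Longrightarrow> t \<le> m \<Longrightarrow> G t \<in> sets (F m)"
    and cond_prob: "\<And>m. AE x in M. q (Suc m) \<le> real_cond_exp M (F m) (indicator (G (Suc m))) x"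
    and q_nonneg: "\<And>t. 0 \<le> q t"
    and diverges: "\<not> summable q"
  shows "AE x in M. \<exists>\<^sub>F t in sequentially. x \<in> G t"
proof -
  interpret prob_space M by (fact assms(1))
  define avoid where "avoid n = space M - (\<Union>t\<in>{n<..}. G t)" for n
  have G_sets: "G t \<in> sets M" if "0 < t" for t
    using adapted[OF that order_refl] subalg[of t] by (auto simp: subalgebra_def)
  have avoid_null: "avoid n \<in> null_sets M" for n
  proof -
    have avoid_sets: "avoid n \<in> sets M"
      unfolding avoid_def using G_sets by (intro sets.Diff sets.top sets.countable_UN') auto
    have avoid_le: "measure M (avoid n) \<le> exp (- B)" for B
    proof -
      obtain m where "n \<le> m" and B: "B \<le> (\<Sum>t\<in>{n<..m}. q t)"
        using not_summable_imp_tail_sum_unbounded[OF q_nonneg diverges] by blast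
      have "measure M (avoid n) \<le> measure M (space M - (\<Union>t\<in>{n<..m}. G t))"
        unfolding avoid_def using G_sets
        by (intro finite_measure_mono sets.Diff sets.top sets.finite_UN) auto
      also have "\<dots> \<le> exp (- (\<Sum>t\<in>{n<..m}. q t))"
        using assms(1) subalg adapted cond_prob \<open>n \<le> m\<close> by (rule measure_avoid_le_exp_sum)
      also have "\<dots> \<le> exp (- B)"
        using B by simp
      finally show ?thesis .
    qed
    have "measure M (avoid n) = 0"
    proof (rule ccontr)
      assume "measure M (avoid n) \<noteq> 0"
      then have pos: "0 < measure M (avoid n)"
        using measure_nonneg[of M "avoid n"] by linarith
      have "measure M (avoid n) \<le> exp (- (1 - ln (measure M (avoid n))))"
        by (fact avoid_le)
      also have "\<dots> = measure M (avoid n) / exp 1"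
        using pos by (simp add: exp_diff exp_minus field_simps)
      also have "\<dots> < measure M (avoid n)"
        using pos by (simp add: divide_less_eq)
      finally show False by simp
    qed
    then show ?thesis
      using avoid_sets by (simp add: null_setsI emeasure_eq_measure)
  qed
  have "{x \<in> space M. \<not> (\<exists>\<^sub>F t in sequentially. x \<in> G t)} \<subseteq> (\<Union>n. avoid n)"
  proof
    fix x assume "x \<in> {x \<in> space M. \<not> (\<exists>\<^sub>F t in sequentially. x \<in> G t)}"
    then obtain n where "x \<in> space M" "\<forall>t\<ge>n. x \<notin> G t"
      unfolding frequently_sequentially by auto
    then show "x \<in> (\<Union>n. avoid n)"
      unfolding avoid_def by (auto intro!: exI[of _ n])
  qed
  then show ?thesis
    using avoid_null by (intro AE_I'[of "\<Union>n. avoid n"]) auto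
qed

lemma hist_gens_subset_Pow: "hist_gens M A R t \<subseteq> Pow (space M)"
  unfolding hist_gens_def by (intro UN_least Un_least) auto

lemma space_hist: "space (hist M A R t) = space M"
  unfolding hist_def by (rule space_measure_of[OF hist_gens_subset_Pow])

lemma sets_hist: "sets (hist M A R t) = sigma_sets (space M) (hist_gens M A R t)"
  unfolding hist_def by (rule sets_measure_of[OF hist_gens_subset_Pow])

lemma subalgebra_hist:
  assumes "\<And>t. A t \<in> M \<rightarrow>\<^sub>M count_space UNIV" and "\<And>t. R t \<in> borel_measurable M"
  shows "subalgebra M (hist M A R t)"
proof -
  have "hist_gens M A R t \<subseteq> sets M"
    unfolding hist_gens_def using assms by (intro UN_least Un_least) auto
  then show ?thesis
    unfolding subalgebra_def space_hist sets_hist by (simp add: sets.sigma_sets_subset)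
qed

lemma pulls_in_hist:
  assumes "1 \<le> s" "s \<le> t"
  shows "{w \<in> space M. A s w = a} \<in> sets (hist M A R t)"
proof -
  have "{w \<in> space M. A s w = a} = A s -` {a} \<inter> space M"
    by auto
  also have "\<dots> \<in> hist_gens M A R t"
    unfolding hist_gens_def using assms by (intro UN_I[of s] UnI1) auto
  finally show ?thesis
    unfolding sets_hist by (rule sigma_sets.Basic)
qed

lemma eps_nonneg: "0 \<le> eps t"
  by (simp add: eps_def)

lemma eps_le_one:
  assumes "1 \<le> t" shows "eps t \<le> 1"
proof -
  have "1 \<le> sqrt (real t)" using assms by simp
  then have "1 \<le> 2 * sqrt (real t)" by linarith
  then show ?thesis by (simp add: eps_def divide_le_eq)
qed

lemma not_summable_eps: "\<not> summable eps"
proof -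
  have eps_powr: "eps = (\<lambda>t. real t powr (- 1 / 2) / 2)"
    by (auto simp: eps_def powr_minus powr_half_sqrt[symmetric] divide_simps)
  have "\<not> summable (\<lambda>t. real t powr (- 1 / 2))"
    by (simp add: summable_real_powr_iff)
  then show ?thesis
    unfolding eps_powr summable_divide_iff by simp
qed

lemma pic_pre_pos:
  assumes "valid_rates p" and "(\<Sum>b\<in>UNIV. p$b) < 1 \<or> (\<forall>b. 0 < p$b)"
  shows "0 < pic_pre p $ a"
proof -
  have nonneg: "\<And>b. 0 \<le> p$b" and sum_le: "(\<Sum>b\<in>UNIV. p$b) \<le> 1"
    using assms(1) by (auto simp: valid_rates_def)
  show ?thesis
  proof (cases "card {b. p$b = 0} = 0")
    case True
    then have "0 < p$a"
      using nonneg[of a] by (auto simp: order.order_iff_strict)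
    then show ?thesis
      using True sum_le by (simp add: pic_pre_def Let_def add_pos_nonneg)
  next
    case False
    then obtain b where "p$b = 0"
      by fastforce
    then have "(\<Sum>b\<in>UNIV. p$b) < 1"
      using assms(2) by (metis less_irrefl)
    then have "0 < (1 - (\<Sum>b\<in>UNIV. p$b)) / real (card {b. p$b = 0})"
      using False by (intro divide_pos_pos) (auto simp: card_gt_0_iff)
    then show ?thesis
      using False nonneg[of a] by (auto simp: pic_pre_def Let_def)
  qed
qed

lemma ftas_pi_ge:
  assumes "\<And>lam. ws lam \<in> Sigma_p (pf lam)" and "1 \<le> t"
  shows "eps t * pic $ a \<le> ftas_pi ws pic th0 A R t w $ a"
proof -
  have "0 \<le> ws (emp_mean th0 A R (t - 1) w) $ a"
    using assms(1) by (simp add: Sigma_p_def)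
  moreover have "0 \<le> 1 - eps t"
    using eps_le_one[OF assms(2)] by simp
  ultimately show ?thesis
    by (simp add: ftas_pi_def mult.commute)
qed

theorem propositionC2:
  fixes M :: "'w measure"
    and A :: "nat \<Rightarrow> 'w \<Rightarrow> 'k::finite"
    and R :: "nat \<Rightarrow> 'w \<Rightarrow> real"
    and th th0 pic :: "real^'k"
    and pf ws :: "real^'k \<Rightarrow> real^'k"
  assumes prob: "prob_space M"
    and theta: "th \<in> Theta"
    and rates: "(\<exists>p. valid_rates p \<and> ((\<Sum>a\<in>UNIV. p$a) < 1 \<or> (\<forall>a. p$a > 0))
                   \<and> pf = (\<lambda>_. p) \<and> pic = pic_pre p)
              \<or> ((\<forall>lam. valid_rates (pf lam)) \<and> continuous_on UNIV pf
                   \<and> pic = (\<chi> a. 1 / real CARD('k)))"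
    and ws_feasible: "\<And>lam. ws lam \<in> Sigma_p (pf lam)"
    and ws_opt: "\<And>lam. lam \<in> Theta \<Longrightarrow> is_opt_alloc (pf lam) lam (ws lam)"
    and meas_A: "\<And>t. A t \<in> M \<rightarrow>\<^sub>M count_space UNIV"
    and meas_R: "\<And>t. R t \<in> borel_measurable M"
    and sampling: "\<And>t a. t \<ge> 1 \<Longrightarrow>
          AE w in M. real_cond_exp M (hist M A R (t - 1))
                        (indicator {w \<in> space M. A t w = a}) w
                     = ftas_pi ws pic th0 A R t w $ a"
    and reward: "\<And>t B. t \<ge> 1 \<Longrightarrow> B \<in> sets borel \<Longrightarrow>
          AE w in M. real_cond_exp M (hist_act M A R t)
                        (indicator {w \<in> space M. R t w \<in> B}) w
                     = measure (density lborel (normal_density (th $ A t w) 1)) B"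
  shows "\<forall>a. AE w in M. filterlim (\<lambda>t. Npulls A t w a) at_top sequentially"
proof
  fix a
  have pic_pos: "0 < pic $ a"
    using rates pic_pre_pos by auto
  have "AE w in M. \<exists>\<^sub>F t in sequentially. w \<in> {w \<in> space M. A t w = a}"
  proof (rule AE_frequently_of_cond_prob_ge[where F = "hist M A R" and q = "\<lambda>t. eps t * pic $ a"])
    show "subalgebra M (hist M A R m)" for m
      using meas_A meas_R by (rule subalgebra_hist)
    show "{w \<in> space M. A t w = a} \<in> sets (hist M A R m)" if "0 < t" "t \<le> m" for t m
      using that by (intro pulls_in_hist) auto
    show "AE w in M. eps (Suc m) * pic $ a
            \<le> real_cond_exp M (hist M A R m) (indicator {w \<in> space M. A (Suc m) w = a}) w" for m
      using sampling[of "Suc m" a, simplified]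
      by eventually_elim (simp add: ftas_pi_ge[OF ws_feasible])
    show "\<not> summable (\<lambda>t. eps t * pic $ a)"
      using not_summable_eps pic_pos by (subst mult.commute) simp
  qed (use prob eps_nonneg pic_pos in auto)
  then show "AE w in M. filterlim (\<lambda>t. Npulls A t w a) at_top sequentially"
  proof eventually_elim
    case (elim w)
    then have "\<exists>\<^sub>F t in sequentially. A t w = a"
      by (auto elim: frequently_elim1)
    then show ?case
      unfolding Npulls_def by (rule filterlim_card_at_top_of_frequently)
  qed
qed

end
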